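(* Let $\Phi$ be a real, additive gain graph on $\{1,\dots,n\}$ and let $\mathbf{Q}=(Q_1,\dots,Q_n)\in(\mathbb{E}^d)^n$ with $Q_i\neq Q_j$ whenever $i$ and $j$ are adjacent in $\Phi$. Let $C$ be a circle in $\Phi$ with $l+1$ vertices $v_1,\dots,v_{l+1}$, and let $\mathcal{C}=\{h(e):e\in C\}$. Suppose $Q_{v_1},\dots,Q_{v_{l+1}}$ are affinely independent. If $C$ is balanced, then $\bigcap\mathcal{C}$ is an affine flat of dimension $d-l$.
   Context: $\mathbb{E}^d$ is Euclidean $d$-space with distance $d(\cdot,\cdot)$; $\psi_{ij}(P)=d(P,Q_i)^2-d(P,Q_j)^2$. A real, additive gain graph $\Phi$ on vertex set $\{1,\dots,n\}$ is a finite graph (multiple edges allowed, every edge with two distinct endpoints) with gains $\phi(e;i,j)\in\mathbb{R}$ for each edge $e$ with endpoints $i,j$, satisfying $\phi(e;j,i)=-\phi(e;i,j)$. A circle is a simple closed path; it is balanced if the sum of its gains, read in a consistent direction, is $0$. The Pythagorean arrangement $\mathcal{H}(\Phi;\mathbf{Q})$ consists of the hyperplanes $h(e)=\{P:\psi_{ij}(P)=\phi(e;i,j)\}$, one for each edge $e$ with endpoints $i,j$. *)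

theory Defs
  imports "HOL-Analysis.Analysis"
begin

text \<open>A real additive gain graph on vertex set {1..n}: a finite edge set E (edge
identifiers of an arbitrary type, so multiple edges are allowed), an endpoint map
ends giving each edge an (arbitrary reference) orientation (i,j), and a real gain g e
meaning phi(e;i,j) = g e where (i,j) = ends e; phi(e;j,i) = - g e.\<close>

definition gain_graph :: "nat \<Rightarrow> 'e set \<Rightarrow> ('e \<Rightarrow> nat \<times> nat) \<Rightarrow> bool" where
  "gain_graph n E ends \<longleftrightarrow> finite E \<and>
     (\<forall>e\<in>E. fst (ends e) \<in> {1..n} \<and> snd (ends e) \<in> {1..n} \<and> fst (ends e) \<noteq> snd (ends e))"

text \<open>Gain of edge e read from i to j (meaningful when {i,j} are the endpoints of e).\<close>
definition gain :: "('e \<Rightarrow> nat \<times> nat) \<Rightarrow> ('e \<Rightarrow> real) \<Rightarrow> 'e \<Rightarrow> nat \<Rightarrow> nat \<Rightarrow> real" where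
  "gain ends g e i j = (if ends e = (i, j) then g e else - g e)"

definition adjacent :: "'e set \<Rightarrow> ('e \<Rightarrow> nat \<times> nat) \<Rightarrow> nat \<Rightarrow> nat \<Rightarrow> bool" where
  "adjacent E ends i j \<longleftrightarrow> (\<exists>e\<in>E. ends e = (i, j) \<or> ends e = (j, i))"

definition is_circle :: "'e set \<Rightarrow> ('e \<Rightarrow> nat \<times> nat) \<Rightarrow> nat list \<Rightarrow> 'e list \<Rightarrow> bool" where
  "is_circle E ends vs es \<longleftrightarrow> length vs \<ge> 2 \<and> length es = length vs \<and>
     distinct vs \<and> distinct es \<and> set es \<subseteq> E \<and>
     (\<forall>k<length vs. ends (es ! k) = (vs ! k, vs ! ((k + 1) mod length vs)) \<or>
                    ends (es ! k) = (vs ! ((k + 1) mod length vs), vs ! k))"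

definition balanced_circle :: "('e \<Rightarrow> nat \<times> nat) \<Rightarrow> ('e \<Rightarrow> real) \<Rightarrow> nat list \<Rightarrow> 'e list \<Rightarrow> bool" where
  "balanced_circle ends g vs es \<longleftrightarrow>
     (\<Sum>k<length vs. gain ends g (es ! k) (vs ! k) (vs ! ((k + 1) mod length vs))) = 0"

definition psi :: "(nat \<Rightarrow> 'a::euclidean_space) \<Rightarrow> nat \<Rightarrow> nat \<Rightarrow> 'a \<Rightarrow> real" where
  "psi Q i j P = (dist P (Q i))\<^sup>2 - (dist P (Q j))\<^sup>2"

text \<open>The hyperplane h(e) = {P. psi_ij(P) = phi(e;i,j)} (independent of orientation).\<close>
definition hyp :: "('e \<Rightarrow> nat \<times> nat) \<Rightarrow> ('e \<Rightarrow> real) \<Rightarrow> (nat \<Rightarrow> 'a::euclidean_space) \<Rightarrow> 'e \<Rightarrow> 'a set" where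
  "hyp ends g Q e = {P. psi Q (fst (ends e)) (snd (ends e)) P = gain ends g e (fst (ends e)) (snd (ends e))}"

end

theory Submission imports Defs begin

text \<open>Write \<open>\<psi>\<^sub>i\<^sub>j\<close> and \<open>Q\<^sub>i\<close> for \<open>\<psi>\<close> and \<open>Q\<close> at the circle vertices \<open>v\<^sub>i\<close>. Since
\<open>\<psi>\<^sub>i\<^sub>j = \<psi>\<^sub>1\<^sub>j - \<psi>\<^sub>1\<^sub>i\<close>, the equations of the circle prescribe the consecutive
differences of the potentials \<open>\<psi>\<^sub>1\<^sub>k(P)\<close> around the circle. When the circle is
balanced the closing equation is redundant, so the system is equivalent to
\<open>\<psi>\<^sub>1\<^sub>k(P) = (partial gain sum)\<close> for \<open>k = 2, \<dots>, l+1\<close>. Each of these is a linear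
equation in \<open>P\<close> with normal \<open>Q\<^sub>k - Q\<^sub>1\<close>; affine independence of the \<open>Q\<^sub>k\<close> makes
these \<open>l\<close> normals linearly independent, and a system of \<open>l\<close> independent linear
equations is consistent with a solution set of dimension \<open>d - l\<close>.\<close>

lemma inner_system_solvable:
  fixes W :: "'a::euclidean_space set" and b :: "'a \<Rightarrow> real"
  assumes ind: "independent W"
  obtains p where "\<forall>v\<in>W. inner p v = b v"
proof -
  have fin: "finite W" using ind independent_explicit by blast
  define T where "T x = (\<Sum>v\<in>W. inner x v *\<^sub>R v)" for x
  have linT: "linear T"
    unfolding T_def
    by (rule linearI) (simp_all add: inner_add_left scaleR_add_left sum.distrib scaleR_sum_right)
  have T_span: "T ` span W \<subseteq> span W"
    unfolding T_def by (auto intro!: span_sum span_mul intro: span_base)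
  \<comment> \<open>The Gram form \<open>inner x (T x) = \<Sum>v\<in>W. (inner x v)\<^sup>2\<close> is definite on \<open>span W\<close>.\<close>
  have "inj_on T (span W)"
  proof (subst linear_inj_on_iff_eq_0[OF linT subspace_span], intro ballI impI)
    fix x assume x: "x \<in> span W" and Tx: "T x = 0"
    have "(\<Sum>v\<in>W. (inner x v)\<^sup>2) = inner x (T x)"
      unfolding T_def by (simp add: inner_sum_right power2_eq_square)
    hence "\<forall>v\<in>W. (inner x v)\<^sup>2 = 0" using Tx fin by (simp add: sum_nonneg_eq_0_iff)
    hence "orthogonal x x" using orthogonal_to_span[OF x] by (simp add: orthogonal_def)
    thus "x = 0" by (simp add: orthogonal_self)
  qed
  hence "dim (T ` span W) = dim (span W)"
    by (intro dim_image_eq[OF linT]) (simp_all add: span_span)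
  hence T_onto: "T ` span W = span W"
    by (intro subspace_dim_equal linear_subspace_image[OF linT] T_span) simp_all
  have "(\<Sum>v\<in>W. b v *\<^sub>R v) \<in> span W" by (auto intro!: span_sum span_mul intro: span_base)
  then obtain p where "T p = (\<Sum>v\<in>W. b v *\<^sub>R v)" by (metis T_onto imageE)
  hence "(\<Sum>v\<in>W. (inner p v - b v) *\<^sub>R v) = 0"
    unfolding T_def by (simp add: scaleR_diff_left sum_subtractf)
  hence "\<forall>v\<in>W. inner p v - b v = 0"
    using independentD[OF ind fin order_refl, of "\<lambda>v. inner p v - b v"] by blast
  thus thesis by (intro that) simp
qed

lemma inner_system_solution_set:
  fixes W :: "'a::euclidean_space set" and b :: "'a \<Rightarrow> real"
  assumes ind: "independent W"
  defines "S \<equiv> {P. \<forall>v\<in>W. inner P v = b v}"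
  shows "affine S" "S \<noteq> {}" "aff_dim S = int DIM('a) - int (card W)"
proof -
  obtain p where p: "\<forall>v\<in>W. inner p v = b v" using inner_system_solvable[OF ind] .
  define N where "N = {y. \<forall>v\<in>W. orthogonal v y}"
  have subN: "subspace N" unfolding N_def by (rule subspace_orthogonal_to_vectors)
  have N_span: "N = {y \<in> UNIV. \<forall>x\<in>span W. orthogonal x y}"
  proof (intro set_eqI iffI)
    fix y assume "y \<in> N"
    hence "orthogonal y x" if "x \<in> span W" for x
      using orthogonal_to_span[OF that] orthogonal_commute unfolding N_def by blast
    thus "y \<in> {y \<in> UNIV. \<forall>x\<in>span W. orthogonal x y}" by (simp add: orthogonal_commute)
  qed (auto simp: N_def intro: span_base)
  have S_eq: "S = (+) p ` N"
  proof (rule set_eqI)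
    fix x
    have "x \<in> S \<longleftrightarrow> x - p \<in> N"
      using p unfolding S_def N_def orthogonal_def by (auto simp: inner_diff_right inner_commute)
    also have "\<dots> \<longleftrightarrow> x \<in> (+) p ` N"
      by (metis add_diff_cancel_left' diff_add_cancel image_iff)
    finally show "x \<in> S \<longleftrightarrow> x \<in> (+) p ` N" .
  qed
  have "dim N + dim (span W) = dim (UNIV :: 'a set)"
    unfolding N_span by (rule dim_subspace_orthogonal_to_vectors) simp_all
  hence "dim N + card W = DIM('a)" by (simp add: dim_eq_card_independent ind)
  thus "aff_dim S = int DIM('a) - int (card W)"
    unfolding S_eq aff_dim_translation_eq aff_dim_subspace[OF subN] by linarith
  show "affine S" unfolding S_eq by (intro affine_translation[THEN iffD1] subspace_imp_affine subN)
  show "S \<noteq> {}" using p unfolding S_def by blast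
qed

lemma inner_system_solution_set_family:
  fixes w :: "'i \<Rightarrow> 'a::euclidean_space" and b :: "'i \<Rightarrow> real"
  assumes "inj_on w I" "independent (w ` I)"
  defines "S \<equiv> {P. \<forall>k\<in>I. inner P (w k) = b k}"
  shows "affine S" "S \<noteq> {}" "aff_dim S = int DIM('a) - int (card I)"
proof -
  have "S = {P. \<forall>v\<in>w ` I. inner P v = b (inv_into I w v)}"
    unfolding S_def using inv_into_f_f[OF assms(1)] by auto
  moreover have "card (w ` I) = card I" by (rule card_image[OF assms(1)])
  ultimately show "affine S" "S \<noteq> {}" "aff_dim S = int DIM('a) - int (card I)"
    using inner_system_solution_set[OF assms(2)] by simp_all
qed

lemma independent_differences_if_affine_independent:
  fixes p :: "nat \<Rightarrow> 'a::real_vector"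
  assumes inj: "inj_on p {..<N}" and indep: "\<not> affine_dependent (p ` {..<N})"
  shows "inj_on (\<lambda>k. p k - p 0) {1..<N}"
    and "independent ((\<lambda>k. p k - p 0) ` {1..<N})"
proof -
  show "inj_on (\<lambda>k. p k - p 0) {1..<N}"
    using inj by (auto intro!: inj_onI dest: inj_onD)
  show "independent ((\<lambda>k. p k - p 0) ` {1..<N})"
  proof (cases "N = 0")
    case False
    have "{..<N} = insert 0 {1..<N}" using False by auto
    hence "p ` {..<N} = insert (p 0) (p ` {1..<N})" by simp
    moreover have "p 0 \<notin> p ` {1..<N}"
      using inj False by (auto dest: inj_onD)
    ultimately have "\<not> dependent ((\<lambda>x. - p 0 + x) ` p ` {1..<N})"
      using indep by (simp add: affine_dependent_iff_dependent)
    thus ?thesis unfolding image_image by simp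
  qed (simp add: independent_empty)
qed

lemma cyclic_differences_iff_partial_sums:
  fixes f c :: "nat \<Rightarrow> 'b::ab_group_add"
  assumes total: "(\<Sum>k<N. c k) = 0"
  shows "(\<forall>k<N. f ((k + 1) mod N) - f k = c k) \<longleftrightarrow> (\<forall>k<N. f k - f 0 = (\<Sum>j<k. c j))"
proof
  assume diff: "\<forall>k<N. f ((k + 1) mod N) - f k = c k"
  show "\<forall>k<N. f k - f 0 = (\<Sum>j<k. c j)"
  proof (intro allI impI)
    fix k assume "k < N"
    thus "f k - f 0 = (\<Sum>j<k. c j)"
    proof (induction k)
      case (Suc k)
      have "f (Suc k) - f k = c k" using diff[rule_format, of k] Suc.prems by simp
      moreover have "f k - f 0 = (\<Sum>j<k. c j)" using Suc by simp
      ultimately show ?case by (metis add.commute diff_add_cancel add_diff_eq sum.lessThan_Suc)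
    qed simp
  qed
next
  assume sums: "\<forall>k<N. f k - f 0 = (\<Sum>j<k. c j)"
  show "\<forall>k<N. f ((k + 1) mod N) - f k = c k"
  proof (intro allI impI)
    fix k assume k: "k < N"
    have fk: "f k = (\<Sum>j<k. c j) + f 0" using sums[rule_format, OF k] by (simp add: diff_eq_eq)
    show "f ((k + 1) mod N) - f k = c k"
    proof (cases "k + 1 = N")
      case True
      have "(\<Sum>j<k. c j) + c k = 0" using total True by auto
      hence "c k = - (\<Sum>j<k. c j)" by (simp add: eq_neg_iff_add_eq_0 add.commute)
      thus ?thesis using True fk by simp
    next
      case False
      hence "(k + 1) mod N = Suc k" "Suc k < N" using k by simp_all
      hence "f ((k + 1) mod N) = (\<Sum>j<k. c j) + c k + f 0"
        using sums[rule_format, of "Suc k"] by (simp add: diff_eq_eq)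
      thus ?thesis using fk by simp
    qed
  qed
qed

lemma psi_swap: "psi Q j i P = - psi Q i j P"
  unfolding psi_def by simp

lemma psi_telescope: "psi Q i j P = psi Q k j P - psi Q k i P"
  unfolding psi_def by simp

lemma psi_eq_iff_inner:
  fixes Q :: "nat \<Rightarrow> 'a::euclidean_space"
  shows "psi Q i j P = r \<longleftrightarrow> inner P (Q j - Q i) = (r - (norm (Q i))\<^sup>2 + (norm (Q j))\<^sup>2) / 2"
proof -
  have "psi Q i j P = 2 * inner P (Q j - Q i) + (norm (Q i))\<^sup>2 - (norm (Q j))\<^sup>2"
    unfolding psi_def dist_norm power2_norm_eq_inner
    by (simp add: inner_commute algebra_simps)
  thus ?thesis by auto
qed

lemma hyp_eq_oriented:
  assumes "ends e = (i, j) \<or> ends e = (j, i)" "i \<noteq> j"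
  shows "hyp ends g Q e = {P. psi Q i j P = gain ends g e i j}"
  using assms(1)
proof
  assume "ends e = (j, i)"
  moreover have "psi Q j i P = g e \<longleftrightarrow> psi Q i j P = - g e" for P
    using psi_swap[of Q j i P] by linarith
  ultimately show ?thesis using assms(2) unfolding hyp_def gain_def by simp
qed (simp add: hyp_def gain_def)

lemma Inter_hyp_circle:
  assumes "is_circle E ends vs es"
  defines "N \<equiv> length vs"
  shows "(\<Inter>e\<in>set es. hyp ends g Q e) =
    {P. \<forall>k<N. psi Q (vs ! k) (vs ! ((k + 1) mod N)) P
                = gain ends g (es ! k) (vs ! k) (vs ! ((k + 1) mod N))}"
proof -
  have circ: "N \<ge> 2" "length es = N" "distinct vs"
    "\<And>k. k < N \<Longrightarrow> ends (es ! k) = (vs ! k, vs ! ((k + 1) mod N)) \<or>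
                     ends (es ! k) = (vs ! ((k + 1) mod N), vs ! k)"
    using assms(1) unfolding is_circle_def N_def by auto
  have distinct_ends: "vs ! k \<noteq> vs ! ((k + 1) mod N)" if "k < N" for k
  proof -
    have "(k + 1) mod N \<noteq> k" using that circ(1) by (cases "k + 1 = N") auto
    moreover have "(k + 1) mod N < N" using that by (intro mod_less_divisor) simp
    ultimately show ?thesis using circ(3) that unfolding N_def by (simp add: nth_eq_iff_index_eq)
  qed
  have hyp_k: "hyp ends g Q (es ! k) = {P. psi Q (vs ! k) (vs ! ((k + 1) mod N)) P
                = gain ends g (es ! k) (vs ! k) (vs ! ((k + 1) mod N))}" if "k < N" for k
    using circ(4)[OF that] by (rule hyp_eq_oriented) (rule distinct_ends[OF that])
  have "set es = (!) es ` {..<N}" using circ(2) by (auto simp: in_set_conv_nth)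
  hence "(\<Inter>e\<in>set es. hyp ends g Q e) = (\<Inter>k<N. hyp ends g Q (es ! k))" by simp
  also have "\<dots> = (\<Inter>k<N. {P. psi Q (vs ! k) (vs ! ((k + 1) mod N)) P
                = gain ends g (es ! k) (vs ! k) (vs ! ((k + 1) mod N))})"
    using hyp_k by simp
  finally show ?thesis by blast
qed

lemma Inter_hyp_balanced_circle:
  assumes circle: "is_circle E ends vs es" and balanced: "balanced_circle ends g vs es"
  defines "N \<equiv> length vs"
    and "c \<equiv> \<lambda>k. gain ends g (es ! k) (vs ! k) (vs ! ((k + 1) mod length vs))"
  shows "(\<Inter>e\<in>set es. hyp ends g Q e) =
    {P. \<forall>k\<in>{1..<N}. psi Q (vs ! 0) (vs ! k) P = (\<Sum>j<k. c j)}"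
proof -
  have total: "(\<Sum>k<N. c k) = 0" using balanced unfolding balanced_circle_def c_def N_def .
  have "(\<Inter>e\<in>set es. hyp ends g Q e) =
    {P. \<forall>k<N. psi Q (vs ! k) (vs ! ((k + 1) mod N)) P = c k}"
    using Inter_hyp_circle[OF circle] unfolding N_def c_def .
  also have "\<dots> = {P. \<forall>k\<in>{1..<N}. psi Q (vs ! 0) (vs ! k) P = (\<Sum>j<k. c j)}"
  proof (rule Collect_cong)
    fix P
    define f where "f k = psi Q (vs ! 0) (vs ! k) P" for k
    have "f 0 = 0" unfolding f_def psi_def by simp
    have "psi Q (vs ! k) (vs ! ((k + 1) mod N)) P = f ((k + 1) mod N) - f k" for k
      unfolding f_def by (rule psi_telescope)
    hence "(\<forall>k<N. psi Q (vs ! k) (vs ! ((k + 1) mod N)) P = c k) \<longleftrightarrow>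
           (\<forall>k<N. f k - f 0 = (\<Sum>j<k. c j))"
      using cyclic_differences_iff_partial_sums[OF total, of f] by simp
    also have "\<dots> \<longleftrightarrow> (\<forall>k\<in>{1..<N}. f k = (\<Sum>j<k. c j))"
      using \<open>f 0 = 0\<close>
      by (auto simp: Ball_def) (metis One_nat_def Suc_leI neq0_conv lessThan_0 sum.empty)
    finally show "(\<forall>k<N. psi Q (vs ! k) (vs ! ((k + 1) mod N)) P = c k) \<longleftrightarrow>
          (\<forall>k\<in>{1..<N}. psi Q (vs ! 0) (vs ! k) P = (\<Sum>j<k. c j))"
      unfolding f_def .
  qed
  finally show ?thesis .
qed

theorem lemma5p3:
  fixes n l :: nat and E :: "'e set" and ends :: "'e \<Rightarrow> nat \<times> nat" and g :: "'e \<Rightarrow> real"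
    and Q :: "nat \<Rightarrow> 'a::euclidean_space" and vs :: "nat list" and es :: "'e list"
  assumes "gain_graph n E ends"
    and "\<And>i j. adjacent E ends i j \<Longrightarrow> Q i \<noteq> Q j"
    and "is_circle E ends vs es"
    and "length vs = l + 1"
    and "inj_on Q (set vs)"
    and "\<not> affine_dependent (Q ` set vs)"
    and "balanced_circle ends g vs es"
  shows "affine (\<Inter>e\<in>set es. hyp ends g Q e) \<and> (\<Inter>e\<in>set es. hyp ends g Q e) \<noteq> {}
         \<and> aff_dim (\<Inter>e\<in>set es. hyp ends g Q e) = int DIM('a) - int l"
proof -
  define p where "p k = Q (vs ! k)" for k
  define b where "b k = (\<Sum>j<k. gain ends g (es ! j) (vs ! j) (vs ! ((j + 1) mod (l + 1))))" for k
  have hyps_eq: "(\<Inter>e\<in>set es. hyp ends g Q e) =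
        {P. \<forall>k\<in>{1..<l + 1}. inner P (p k - p 0) = (b k - (norm (p 0))\<^sup>2 + (norm (p k))\<^sup>2) / 2}"
    using Inter_hyp_balanced_circle[OF assms(3,7), of Q]
    unfolding assms(4) psi_eq_iff_inner p_def b_def .
  have "inj_on p {..<l + 1}"
    using assms(3-5) unfolding is_circle_def p_def
    by (auto intro!: inj_onI dest: inj_onD simp: nth_eq_iff_index_eq)
  moreover have "p ` {..<l + 1} = Q ` set vs"
    using assms(4) unfolding p_def set_conv_nth by auto
  ultimately have "inj_on (\<lambda>k. p k - p 0) {1..<l + 1}"
    and "independent ((\<lambda>k. p k - p 0) ` {1..<l + 1})"
    using independent_differences_if_affine_independent[of p "l + 1"] assms(6) by simp_all
  from inner_system_solution_set_family[OF this,
      of "\<lambda>k. (b k - (norm (p 0))\<^sup>2 + (norm (p k))\<^sup>2) / 2", folded hyps_eq]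
  show ?thesis by simp
qed

end
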